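(* For linear codes $\mathcal{C}_1,\dots,\mathcal{C}_D\subseteq\mathbb{F}_q^n$ and the zero code $\mathbf{0}\subseteq\mathbb{F}_q^n$ we have $\rho(\mathbf{0},\mathcal{C}_1,\dots,\mathcal{C}_D)=\rho(\mathcal{C}_1,\dots,\mathcal{C}_D)$.
   Context: $\mathbb{F}_q$ is a finite field of characteristic 2. For a finite set $S$, $|v|$ is the Hamming weight of $v\in\mathbb{F}_q^S$ and $\|v\|=|v|/|S|$. For linear codes $\mathcal{A}_1,\dots,\mathcal{A}_E\subseteq\mathbb{F}_q^n$: $\mathcal{L}_i$ is the set of lines in $[n]^E$ parallel to the $i$-th axis; $\mathcal{A}^{(i)}=\{c\in\mathbb{F}_q^{[n]^E}:c|_\ell\in\mathcal{A}_i\ \forall\ell\in\mathcal{L}_i\}$; $\mathcal{A}_1\boxplus\cdots\boxplus\mathcal{A}_E=\sum_i\mathcal{A}^{(i)}$; $|x|_i$ is the number of $\ell\in\mathcal{L}_i$ with $x|_\ell\ne0$ and $\|x\|_i=|x|_i/n^{E-1}$. The collection is $\rho$-product-expanding if every $c\in\mathcal{A}_1\boxplus\cdots\boxplus\mathcal{A}_E$ can be written $c=\sum_ia_i$, $a_i\in\mathcal{A}^{(i)}$, with $\rho\sum_i\|a_i\|_i\le\|c\|$; $\rho(\mathcal{A}_1,\dots,\mathcal{A}_E)$ is the maximal such $\rho$. *)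

theory Defs
  imports Complex_Main "HOL-Library.Extended_Real"
begin

(* Words of F_q^n: functions nat => 'a, supported on {..<n}. *)
definition lin_code :: "nat \<Rightarrow> (nat \<Rightarrow> 'a::field) set \<Rightarrow> bool" where
  "lin_code n A \<longleftrightarrow>
     (\<forall>v\<in>A. \<forall>j. n \<le> j \<longrightarrow> v j = 0) \<and>
     (\<lambda>_. 0) \<in> A \<and>
     (\<forall>u\<in>A. \<forall>v\<in>A. (\<lambda>j. u j + v j) \<in> A) \<and>
     (\<forall>a. \<forall>v\<in>A. (\<lambda>j. a * v j) \<in> A)"

definition zero_code :: "(nat \<Rightarrow> 'a::zero) set" where
  "zero_code = {\<lambda>_. 0}"

definition grid :: "nat \<Rightarrow> nat \<Rightarrow> nat list set" where
  "grid n E = {xs. length xs = E \<and> (\<forall>k\<in>set xs. k < n)}"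

definition lines :: "nat \<Rightarrow> nat \<Rightarrow> nat \<Rightarrow> nat list set set" where
  "lines n E i = {{xs[i := j] | j. j < n} | xs. xs \<in> grid n E}"

(* Restriction of c to the line through xs parallel to axis i, identified with [n] *)
definition restr :: "nat \<Rightarrow> nat \<Rightarrow> (nat list \<Rightarrow> 'a::zero) \<Rightarrow> nat list \<Rightarrow> nat \<Rightarrow> 'a" where
  "restr n i c xs = (\<lambda>j. if j < n then c (xs[i := j]) else 0)"

definition words :: "nat \<Rightarrow> nat \<Rightarrow> (nat list \<Rightarrow> 'a::zero) set" where
  "words n E = {c. \<forall>x. x \<notin> grid n E \<longrightarrow> c x = 0}"

definition axis_code :: "nat \<Rightarrow> nat \<Rightarrow> nat \<Rightarrow> (nat \<Rightarrow> 'a::zero) set \<Rightarrow> (nat list \<Rightarrow> 'a) set" where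
  "axis_code n E i A = {c \<in> words n E. \<forall>xs\<in>grid n E. restr n i c xs \<in> A}"

definition rel_wt :: "nat \<Rightarrow> nat \<Rightarrow> (nat list \<Rightarrow> 'a::zero) \<Rightarrow> real" where
  "rel_wt n E c = real (card {x \<in> grid n E. c x \<noteq> 0}) / real (card (grid n E))"

definition line_wt :: "nat \<Rightarrow> nat \<Rightarrow> nat \<Rightarrow> (nat list \<Rightarrow> 'a::zero) \<Rightarrow> real" where
  "line_wt n E i c = real (card {l \<in> lines n E i. \<exists>x\<in>l. c x \<noteq> 0}) / real n ^ (E - 1)"

(* membership in A_1 \<boxplus> ... \<boxplus> A_E, codes given as a list As with E = length As *)
definition sum_code :: "nat \<Rightarrow> (nat \<Rightarrow> 'a::field) set list \<Rightarrow> (nat list \<Rightarrow> 'a) set" where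
  "sum_code n As = {c. \<exists>a. (\<forall>i<length As. a i \<in> axis_code n (length As) i (As ! i))
                             \<and> c = (\<lambda>x. \<Sum>i<length As. a i x)}"

definition product_expanding :: "nat \<Rightarrow> (nat \<Rightarrow> 'a::field) set list \<Rightarrow> real \<Rightarrow> bool" where
  "product_expanding n As r \<longleftrightarrow>
     (\<forall>c\<in>sum_code n As. \<exists>a. (\<forall>i<length As. a i \<in> axis_code n (length As) i (As ! i))
         \<and> c = (\<lambda>x. \<Sum>i<length As. a i x)
         \<and> r * (\<Sum>i<length As. line_wt n (length As) i (a i)) \<le> rel_wt n (length As) c)"

(* maximal rho (as a supremum in the extended reals; +infinity in degenerate cases) *)
definition rho :: "nat \<Rightarrow> (nat \<Rightarrow> 'a::field) set list \<Rightarrow> ereal" where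
  "rho n As = Sup {ereal r | r. product_expanding n As r}"

end

theory Submission
  imports Defs
begin

(* Slice [n]^(1+D) along the first coordinate into n copies of [n]^D. The zero code forces the
   first component of every decomposition to vanish, a word lies in C^(i+1) iff each of its n
   slices lies in C^(i), and both the relative weight and the normalised line weights
   ||.||_(i+1) are averages over the slices of the corresponding quantities in dimension D.
   Hence decompositions of the slices of c glue to a decomposition of c that is as good, giving
   rho(0, C) >= rho(C). Conversely, a decomposition of the word all of whose slices equal c' has,
   by averaging, some slice that decomposes c' at least as well, giving rho(C) >= rho(0, C). *)

lemma grid_0: "grid n 0 = {[]}"
  by (auto simp: grid_def)

lemma Cons_in_grid_Suc_iff: "t # y \<in> grid n (Suc D) \<longleftrightarrow> t < n \<and> y \<in> grid n D"
  by (auto simp: grid_def)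

lemma in_grid_SucE:
  assumes "x \<in> grid n (Suc D)"
  obtains t y where "x = t # y" "t < n" "y \<in> grid n D"
  using assms by (cases x) (auto simp: grid_def)

lemma grid_Suc: "grid n (Suc D) = (\<lambda>(t, y). t # y) ` ({..<n} \<times> grid n D)"
  by (auto simp: Cons_in_grid_Suc_iff elim: in_grid_SucE)

lemma finite_grid: "finite (grid n D)"
  by (induction D) (auto simp: grid_0 grid_Suc)

lemma list_update_in_grid: "y \<in> grid n D \<Longrightarrow> j < n \<Longrightarrow> y[i := j] \<in> grid n D"
  using set_update_subset_insert[of y i j] by (auto simp: grid_def)

lemma card_grid_Suc_filter:
  "card {x \<in> grid n (Suc D). P x} = (\<Sum>t<n. card {y \<in> grid n D. P (t # y)})"
proof -
  have "{x \<in> grid n (Suc D). P x} = (\<lambda>(t, y). t # y) ` (SIGMA t:{..<n}. {y \<in> grid n D. P (t # y)})"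
    by (auto simp: grid_Suc)
  moreover have "inj_on (\<lambda>(t, y). t # y) (SIGMA t:{..<n}. {y \<in> grid n D. P (t # y)})"
    by (auto simp: inj_on_def)
  ultimately show ?thesis
    by (simp add: card_image card_SigmaI finite_grid)
qed

lemma card_grid: "card (grid n D) = n ^ D"
  using card_grid_Suc_filter[of n _ "\<lambda>_. True"] by (induction D) (simp_all add: grid_0)

lemma lines_subset_grid: "l \<in> lines n D i \<Longrightarrow> l \<subseteq> grid n D"
  by (auto simp: lines_def list_update_in_grid)

lemma lines_eq_image: "lines n D i = (\<lambda>xs. {xs[i := j] | j. j < n}) ` grid n D"
  by (auto simp: lines_def)

lemma finite_lines: "finite (lines n D i)"
  by (simp add: lines_eq_image finite_grid)

lemma lines_Suc:
  "lines n (Suc D) (Suc i) = (\<lambda>(t, l). Cons t ` l) ` ({..<n} \<times> lines n D i)"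
proof -
  have "{t # y[i := j] | j. j < n} = Cons t ` {y[i := j] | j. j < n}" for t y
    by auto
  then have "lines n (Suc D) (Suc i)
      = (\<lambda>(t, l). Cons t ` l) ` map_prod id (\<lambda>y. {y[i := j] | j. j < n}) ` ({..<n} \<times> grid n D)"
    by (simp add: lines_eq_image grid_Suc image_image split_def)
  then show ?thesis
    by (simp add: map_prod_surj_on lines_eq_image)
qed

lemma inj_on_Cons_lines:
  assumes "0 < n"
  shows "inj_on (\<lambda>(t, l). Cons t ` l) ({..<n} \<times> lines n D i)"
proof (rule inj_onI, clarify)
  fix t t' l l'
  assume "l \<in> lines n D i" and eq: "Cons t ` l = Cons t' ` l'"
  moreover from \<open>0 < n\<close> have "l \<in> lines n D i \<Longrightarrow> l \<noteq> {}"
    by (auto simp: lines_def)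
  ultimately have "t = t'"
    by blast
  with eq show "t = t' \<and> l = l'"
    by (simp add: inj_image_eq_iff)
qed

lemma card_lines_Suc_filter:
  assumes "0 < n"
  shows "card {L \<in> lines n (Suc D) (Suc i). P L} = (\<Sum>t<n. card {l \<in> lines n D i. P (Cons t ` l)})"
proof -
  have "{L \<in> lines n (Suc D) (Suc i). P L}
      = (\<lambda>(t, l). Cons t ` l) ` (SIGMA t:{..<n}. {l \<in> lines n D i. P (Cons t ` l)})"
    unfolding lines_Suc Compr_image_eq by auto
  moreover have "inj_on (\<lambda>(t, l). Cons t ` l) (SIGMA t:{..<n}. {l \<in> lines n D i. P (Cons t ` l)})"
    by (rule inj_on_subset[OF inj_on_Cons_lines[OF assms]]) auto
  ultimately show ?thesis
    by (simp add: card_image card_SigmaI finite_lines)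
qed

definition slice :: "nat \<Rightarrow> nat \<Rightarrow> (nat list \<Rightarrow> 'a::zero) \<Rightarrow> nat \<Rightarrow> nat list \<Rightarrow> 'a" where
  "slice n D f t = (\<lambda>y. if y \<in> grid n D then f (t # y) else 0)"

definition glue :: "nat \<Rightarrow> nat \<Rightarrow> (nat \<Rightarrow> nat list \<Rightarrow> 'a::zero) \<Rightarrow> nat list \<Rightarrow> 'a" where
  "glue n D g = (\<lambda>x. if x \<in> grid n (Suc D) then g (hd x) (tl x) else 0)"

lemma slice_in_words: "slice n D f t \<in> words n D"
  by (simp add: slice_def words_def)

lemma glue_in_words: "glue n D g \<in> words n (Suc D)"
  by (simp add: glue_def words_def)

lemma slice_glue: "t < n \<Longrightarrow> g t \<in> words n D \<Longrightarrow> slice n D (glue n D g) t = g t"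
  by (auto simp: slice_def glue_def Cons_in_grid_Suc_iff words_def)

lemma slice_sum: "slice n D (\<lambda>x. \<Sum>j\<in>J. f j x) t = (\<lambda>y. \<Sum>j\<in>J. slice n D (f j) t y)"
  by (simp add: slice_def fun_eq_iff)

lemma words_Suc_eqI:
  assumes "f \<in> words n (Suc D)" "g \<in> words n (Suc D)"
    and "\<And>t. t < n \<Longrightarrow> slice n D f t = slice n D g t"
  shows "f = g"
proof
  fix x
  show "f x = g x"
  proof (cases "x \<in> grid n (Suc D)")
    case True
    then obtain t y where "x = t # y" "t < n" "y \<in> grid n D"
      by (rule in_grid_SucE)
    with assms(3)[of t] show ?thesis
      by (auto simp: slice_def dest: fun_cong[where x = y])
  qed (use assms(1,2) in \<open>simp add: words_def\<close>)
qed

lemma restr_slice: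
  "y \<in> grid n D \<Longrightarrow> restr n i (slice n D f t) y = restr n (Suc i) f (t # y)"
  by (auto simp: restr_def slice_def list_update_in_grid)

lemma axis_code_Suc_iff:
  assumes "f \<in> words n (Suc D)"
  shows "f \<in> axis_code n (Suc D) (Suc i) A \<longleftrightarrow> (\<forall>t<n. slice n D f t \<in> axis_code n D i A)"
  using assms
  by (auto simp: axis_code_def slice_in_words restr_slice Cons_in_grid_Suc_iff
           elim!: in_grid_SucE)

lemma axis_code_zero_code: "axis_code n (Suc D) 0 zero_code = {\<lambda>_. 0}"
proof (intro equalityI subsetI)
  fix f
  assume f: "f \<in> axis_code n (Suc D) 0 zero_code"
  have "f x = 0" if x: "x \<in> grid n (Suc D)" for x
  proof -
    obtain t y where "x = t # y" "t < n" "y \<in> grid n D"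
      using x by (rule in_grid_SucE)
    moreover have "restr n 0 f x = (\<lambda>_. 0)"
      using f x by (simp add: axis_code_def zero_code_def)
    ultimately show "f x = 0"
      by (auto simp: restr_def dest: fun_cong[where x = t])
  qed
  with f show "f \<in> {\<lambda>_. 0}"
    by (auto simp: axis_code_def words_def)
qed (simp add: axis_code_def zero_code_def words_def restr_def)

lemma rel_wt_Suc: "rel_wt n (Suc D) f * n = (\<Sum>t<n. rel_wt n D (slice n D f t))"
proof -
  have "{y \<in> grid n D. f (t # y) \<noteq> 0} = {y \<in> grid n D. slice n D f t y \<noteq> 0}" for t
    by (auto simp: slice_def)
  then show ?thesis
    using card_grid_Suc_filter[of n D "\<lambda>x. f x \<noteq> 0"]
    by (cases "n = 0") (simp_all add: rel_wt_def card_grid sum_divide_distrib[symmetric])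
qed

(* For D = 0 the normalisation n^(D - 1) is 1 by truncated subtraction and the identity fails. *)
lemma line_wt_Suc:
  assumes "0 < D"
  shows "line_wt n (Suc D) (Suc i) f * n = (\<Sum>t<n. line_wt n D i (slice n D f t))"
proof (cases "n = 0")
  case False
  have "(\<exists>x\<in>Cons t ` l. f x \<noteq> 0) \<longleftrightarrow> (\<exists>y\<in>l. slice n D f t y \<noteq> 0)" if "l \<in> lines n D i" for t l
    using lines_subset_grid[OF that] by (fastforce simp: slice_def)
  then have "card {L \<in> lines n (Suc D) (Suc i). \<exists>x\<in>L. f x \<noteq> 0}
      = (\<Sum>t<n. card {l \<in> lines n D i. \<exists>y\<in>l. slice n D f t y \<noteq> 0})"
    using False by (simp add: card_lines_Suc_filter cong: conj_cong)
  moreover have "real n ^ (Suc D - 1) = real n * real n ^ (D - 1)"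
    using assms by (cases D) auto
  ultimately show ?thesis
    using False by (simp add: line_wt_def sum_divide_distrib[symmetric])
qed simp

lemma ex_le_if_sum_le:
  fixes f g :: "'a \<Rightarrow> 'b::linordered_ab_group_add"
  assumes "finite A" "A \<noteq> {}" "sum f A \<le> sum g A"
  shows "\<exists>x\<in>A. f x \<le> g x"
proof (rule ccontr)
  assume "\<not> ?thesis"
  then have "sum g A < sum f A"
    using assms(1,2) by (intro sum_strict_mono) auto
  with assms(3) show False
    by simp
qed

definition decomposition ::
    "nat \<Rightarrow> (nat \<Rightarrow> 'a::field) set list \<Rightarrow> (nat list \<Rightarrow> 'a) \<Rightarrow> (nat \<Rightarrow> nat list \<Rightarrow> 'a) \<Rightarrow> bool" where
  "decomposition n As c a \<longleftrightarrow>
     (\<forall>i<length As. a i \<in> axis_code n (length As) i (As ! i)) \<and> c = (\<lambda>x. \<Sum>i<length As. a i x)"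

definition line_wt_sum :: "nat \<Rightarrow> nat \<Rightarrow> (nat \<Rightarrow> nat list \<Rightarrow> 'a::zero) \<Rightarrow> real" where
  "line_wt_sum n E a = (\<Sum>i<E. line_wt n E i (a i))"

lemma sum_code_iff: "c \<in> sum_code n As \<longleftrightarrow> (\<exists>a. decomposition n As c a)"
  by (simp add: sum_code_def decomposition_def)

lemma product_expanding_iff:
  "product_expanding n As r \<longleftrightarrow>
     (\<forall>c\<in>sum_code n As. \<exists>a. decomposition n As c a
        \<and> r * line_wt_sum n (length As) a \<le> rel_wt n (length As) c)"
  by (simp add: product_expanding_def decomposition_def line_wt_sum_def conj_assoc)

lemma line_wt_sum_0: "line_wt_sum 0 E a = 0"
proof -
  have "lines 0 E i = {}" if "i < E" for i
    using that by (cases E) (simp_all add: lines_def grid_Suc)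
  then show ?thesis
    by (simp add: line_wt_sum_def line_wt_def)
qed

lemma rel_wt_nonneg: "0 \<le> rel_wt n E c"
  by (simp add: rel_wt_def)

lemma decomposition_in_words: "decomposition n As c a \<Longrightarrow> c \<in> words n (length As)"
  by (simp add: decomposition_def axis_code_def words_def)

lemma decomposition_Cons_zero_code_0:
  "decomposition n (zero_code # Cs) c a \<Longrightarrow> a 0 = (\<lambda>_. 0)"
  using axis_code_zero_code by (fastforce simp: decomposition_def)

lemma decomposition_Cons_zero_code_slice:
  assumes a: "decomposition n (zero_code # Cs) c a" and "t < n"
  shows "decomposition n Cs (slice n (length Cs) c t) (\<lambda>i. slice n (length Cs) (a (Suc i)) t)"
proof -
  let ?D = "length Cs"
  have "a (Suc i) \<in> axis_code n (Suc ?D) (Suc i) (Cs ! i)" if "i < ?D" for i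
    using a that by (auto simp: decomposition_def)
  then have "slice n ?D (a (Suc i)) t \<in> axis_code n ?D i (Cs ! i)" if "i < ?D" for i
    using that \<open>t < n\<close> axis_code_Suc_iff by (fastforce simp: axis_code_def)
  moreover have "c = (\<lambda>x. \<Sum>i<?D. a (Suc i) x)"
    using a decomposition_Cons_zero_code_0[OF a]
    by (simp add: decomposition_def sum.lessThan_Suc_shift del: sum.lessThan_Suc)
  ultimately show ?thesis
    by (simp add: decomposition_def slice_sum)
qed

definition stack :: "nat \<Rightarrow> nat \<Rightarrow> (nat \<Rightarrow> nat \<Rightarrow> nat list \<Rightarrow> 'a) \<Rightarrow> nat \<Rightarrow> nat list \<Rightarrow> 'a::zero" where
  "stack n D b i = (case i of 0 \<Rightarrow> (\<lambda>_. 0) | Suc j \<Rightarrow> glue n D (\<lambda>t. b t j))"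

lemma stack_0 [simp]: "stack n D b 0 = (\<lambda>_. 0)"
  and stack_Suc [simp]: "stack n D b (Suc j) = glue n D (\<lambda>t. b t j)"
  by (simp_all add: stack_def)

lemma decomposition_Cons_zero_code_stack:
  assumes c: "c \<in> words n (Suc (length Cs))"
    and b: "\<And>t. t < n \<Longrightarrow> decomposition n Cs (slice n (length Cs) c t) (b t)"
  shows "decomposition n (zero_code # Cs) c (stack n (length Cs) b)"
proof -
  let ?D = "length Cs"
  have b_words: "b t j \<in> words n ?D" if "t < n" "j < ?D" for t j
    using b[OF that(1)] that(2) by (auto simp: decomposition_def axis_code_def)
  have "glue n ?D (\<lambda>t. b t j) \<in> axis_code n (Suc ?D) (Suc j) (Cs ! j)" if "j < ?D" for j
    using b that by (auto simp: axis_code_Suc_iff glue_in_words slice_glue b_words decomposition_def)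
  then have components: "\<forall>i<Suc ?D. stack n ?D b i \<in> axis_code n (Suc ?D) i ((zero_code # Cs) ! i)"
    by (auto simp: less_Suc_eq_0_disj axis_code_zero_code)
  have "c = (\<lambda>x. \<Sum>j<?D. glue n ?D (\<lambda>t. b t j) x)"
  proof (rule words_Suc_eqI)
    show "(\<lambda>x. \<Sum>j<?D. glue n ?D (\<lambda>t. b t j) x) \<in> words n (Suc ?D)"
      by (simp add: words_def glue_def)
    fix t
    assume "t < n"
    then have "slice n ?D (\<lambda>x. \<Sum>j<?D. glue n ?D (\<lambda>t. b t j) x) t = (\<lambda>y. \<Sum>j<?D. b t j y)"
      by (simp add: slice_sum slice_glue b_words)
    also have "\<dots> = slice n ?D c t"
      using b[OF \<open>t < n\<close>] by (simp add: decomposition_def)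
    finally show "slice n ?D c t = slice n ?D (\<lambda>x. \<Sum>j<?D. glue n ?D (\<lambda>t. b t j) x) t" ..
  qed (rule c)
  with components show ?thesis
    by (simp add: decomposition_def sum.lessThan_Suc_shift del: sum.lessThan_Suc)
qed

lemma line_wt_sum_Suc:
  assumes "a 0 = (\<lambda>_. 0)"
  shows "line_wt_sum n (Suc D) a * n = (\<Sum>t<n. line_wt_sum n D (\<lambda>i. slice n D (a (Suc i)) t))"
proof -
  have "line_wt_sum n (Suc D) a * n = (\<Sum>i<D. line_wt n (Suc D) (Suc i) (a (Suc i)) * n)"
    using assms by (simp add: line_wt_sum_def line_wt_def sum.lessThan_Suc_shift sum_distrib_right
        del: sum.lessThan_Suc)
  also have "\<dots> = (\<Sum>i<D. \<Sum>t<n. line_wt n D i (slice n D (a (Suc i)) t))"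
    by (intro sum.cong refl) (simp add: line_wt_Suc)
  also have "\<dots> = (\<Sum>t<n. line_wt_sum n D (\<lambda>i. slice n D (a (Suc i)) t))"
    by (simp add: line_wt_sum_def sum.swap[of _ "{..<D}"])
  finally show ?thesis .
qed

lemma product_expanding_Cons_zero_codeI:
  assumes pe: "product_expanding n Cs r"
  shows "product_expanding n (zero_code # Cs) r"
  unfolding product_expanding_iff
proof
  let ?D = "length Cs"
  fix c
  assume "c \<in> sum_code n (zero_code # Cs)"
  then obtain a where a: "decomposition n (zero_code # Cs) c a"
    by (auto simp: sum_code_iff)
  have "slice n ?D c t \<in> sum_code n Cs" if "t < n" for t
    using decomposition_Cons_zero_code_slice[OF a that] by (auto simp: sum_code_iff)
  then have "\<forall>t<n. \<exists>b. decomposition n Cs (slice n ?D c t) b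
      \<and> r * line_wt_sum n ?D b \<le> rel_wt n ?D (slice n ?D c t)"
    using pe by (simp add: product_expanding_iff)
  then obtain b where b: "\<And>t. t < n \<Longrightarrow> decomposition n Cs (slice n ?D c t) (b t)"
    and b_le: "\<And>t. t < n \<Longrightarrow> r * line_wt_sum n ?D (b t) \<le> rel_wt n ?D (slice n ?D c t)"
    by metis
  have c: "c \<in> words n (Suc ?D)"
    using decomposition_in_words[OF a] by simp
  let ?a = "stack n ?D b"
  have "r * line_wt_sum n (Suc ?D) ?a \<le> rel_wt n (Suc ?D) c"
  proof (cases "n = 0")
    case False
    have "slice n ?D (?a (Suc i)) t = b t i" if "t < n" "i < ?D" for t i
      using b[OF that(1)] that by (simp add: slice_glue decomposition_def axis_code_def)
    then have "line_wt_sum n (Suc ?D) ?a * n = (\<Sum>t<n. line_wt_sum n ?D (b t))"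
      by (simp add: line_wt_sum_Suc) (simp add: line_wt_sum_def)
    then have "r * line_wt_sum n (Suc ?D) ?a * n = (\<Sum>t<n. r * line_wt_sum n ?D (b t))"
      by (simp add: mult.assoc sum_distrib_left)
    also have "\<dots> \<le> (\<Sum>t<n. rel_wt n ?D (slice n ?D c t))"
      using b_le by (intro sum_mono) simp
    also have "\<dots> = rel_wt n (Suc ?D) c * n"
      by (simp add: rel_wt_Suc)
    finally show ?thesis
      using False by simp
  qed (simp add: line_wt_sum_0 rel_wt_nonneg)
  with decomposition_Cons_zero_code_stack[OF c b] show "\<exists>a. decomposition n (zero_code # Cs) c a
      \<and> r * line_wt_sum n (length (zero_code # Cs)) a \<le> rel_wt n (length (zero_code # Cs)) c"
    by auto
qed

lemma product_expanding_Cons_zero_codeD: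
  assumes pe: "product_expanding n (zero_code # Cs) r"
  shows "product_expanding n Cs r"
  unfolding product_expanding_iff
proof
  let ?D = "length Cs"
  fix c'
  assume "c' \<in> sum_code n Cs"
  then obtain a where a: "decomposition n Cs c' a"
    by (auto simp: sum_code_iff)
  show "\<exists>b. decomposition n Cs c' b \<and> r * line_wt_sum n ?D b \<le> rel_wt n ?D c'"
  proof (cases "n = 0")
    case True
    with a show ?thesis
      by (auto simp: line_wt_sum_0 rel_wt_nonneg)
  next
    case False
    define c where "c = glue n ?D (\<lambda>_. c')"
    have slice_c: "slice n ?D c t = c'" if "t < n" for t
      using that decomposition_in_words[OF a] by (simp add: c_def slice_glue)
    have "decomposition n (zero_code # Cs) c (stack n ?D (\<lambda>_. a))"
      using a slice_c by (intro decomposition_Cons_zero_code_stack) (simp_all add: c_def glue_in_words)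
    then obtain a' where a': "decomposition n (zero_code # Cs) c a'"
      and le: "r * line_wt_sum n (Suc ?D) a' \<le> rel_wt n (Suc ?D) c"
      using pe by (force simp: product_expanding_iff sum_code_iff)
    let ?b = "\<lambda>t i. slice n ?D (a' (Suc i)) t"
    have "(\<Sum>t<n. r * line_wt_sum n ?D (?b t)) = r * (line_wt_sum n (Suc ?D) a' * n)"
      using decomposition_Cons_zero_code_0[OF a'] by (simp add: line_wt_sum_Suc sum_distrib_left)
    also have "\<dots> \<le> rel_wt n (Suc ?D) c * n"
      using le by (simp add: mult_right_mono mult.assoc[symmetric])
    also have "\<dots> = (\<Sum>t<n. rel_wt n ?D c')"
      by (simp add: rel_wt_Suc slice_c)
    finally have "\<exists>t\<in>{..<n}. r * line_wt_sum n ?D (?b t) \<le> rel_wt n ?D c'"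
      by (rule ex_le_if_sum_le[rotated 2]) (use False in auto)
    then obtain t where "t < n" "r * line_wt_sum n ?D (?b t) \<le> rel_wt n ?D c'"
      by blast
    moreover have "decomposition n Cs c' (?b t)"
      using decomposition_Cons_zero_code_slice[OF a' \<open>t < n\<close>] slice_c[OF \<open>t < n\<close>] by simp
    ultimately show ?thesis
      by blast
  qed
qed

theorem lemma3:
  fixes n :: nat and Cs :: "(nat \<Rightarrow> 'a::{field,finite}) set list"
  assumes "CHAR('a) = 2"
    and "\<forall>C\<in>set Cs. lin_code n C"
  shows "rho n (zero_code # Cs) = rho n Cs"
proof -
  have "product_expanding n (zero_code # Cs) = product_expanding n Cs"
    using product_expanding_Cons_zero_codeI product_expanding_Cons_zero_codeD by blast
  then show ?thesis
    by (simp add: rho_def)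
qed

end
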